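(* Let $(a_n)$, $(b_n)$ be positive sequences and set $p_n=a_n n^{-1}\log n$ and $q_n=b_n n^{-1}\log n$. Suppose there is a constant $C$ such that $C^{-1}\le a_n,b_n\le C$ for all but finitely many $n$. Then $P(n,p_n,q_n)=o(n^{-1})$ if and only if \[ (a_n+b_n-2\sqrt{a_nb_n}-1)\log n+\tfrac12\log\log n\to\infty . \]
   Context: For integers $m,n\ge0$ and $p,q\in[0,1]$, $P(m,n,p,q)=\Pr(Y\ge X)$ where $X\sim\mathrm{Binom}(m,\max\{p,q\})$ and $Y\sim\mathrm{Binom}(n,\min\{p,q\})$ are independent; $P(n,p,q)=P(n,n,p,q)$. *)

theory Defs
  imports "HOL-Analysis.Analysis" "HOL-Library.Landau_Symbols"
begin

definition binom_pmf :: "nat \<Rightarrow> real \<Rightarrow> nat \<Rightarrow> real" where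
  "binom_pmf n p k = real (n choose k) * p ^ k * (1 - p) ^ (n - k)"

text \<open>P(m,n,p,q) = Pr(Y \<ge> X), X ~ Binom(m, max p q), Y ~ Binom(n, min p q) independent.\<close>
definition Pmnpq :: "nat \<Rightarrow> nat \<Rightarrow> real \<Rightarrow> real \<Rightarrow> real" where
  "Pmnpq m n p q =
     (\<Sum>x\<le>m. \<Sum>y\<le>n. if x \<le> y then binom_pmf m (max p q) x * binom_pmf n (min p q) y else 0)"

definition Pnpq :: "nat \<Rightarrow> real \<Rightarrow> real \<Rightarrow> real" where
  "Pnpq n p q = Pmnpq n n p q"

end

theory Submission
  imports Defs "HOL-Real_Asymp.Real_Asymp"
begin

text \<open>
  For \<open>q \<le> p\<close>, exponential tilting rewrites \<open>Binom(n,p)(x) Binom(n,q)(y)\<close> as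
  \<open>B\<^sup>2\<^sup>n t\<^sup>x\<^sup>-\<^sup>y R(x) R(y)\<close>, where \<open>B = \<surd>(pq) + \<surd>((1-p)(1-q))\<close> is the Bhattacharyya
  coefficient, \<open>R\<close> is the pmf of \<open>Binom(n, \<surd>(pq)/B)\<close> and \<open>t = \<surd>(p(1-q)/(q(1-p))) \<ge> \<surd>(p/q)\<close>.
  Summing over \<open>x \<le> y\<close>, \<open>P(n,p,q) / B\<^sup>2\<^sup>n\<close> lies between the collision probability
  \<open>\<Sum> R(k)\<^sup>2\<close> and \<open>t/(t-1)\<close> times it, and the collision probability of \<open>Binom(n,r)\<close> is of
  order \<open>(nr)\<^sup>-\<^sup>1\<^sup>/\<^sup>2\<close>. For \<open>p, q = O(log n / n)\<close> also \<open>B\<^sup>2\<^sup>n = exp(-n(\<surd>p-\<surd>q)\<^sup>2 + O(1))\<close>, so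
  \<open>n P(n,p\<^sub>n,q\<^sub>n)\<close> is bounded below by a multiple of \<open>exp(-E\<^sub>n)\<close>, \<open>E\<^sub>n\<close> the expression of the
  statement, and bounded above by a multiple of it as soon as \<open>E\<^sub>n \<ge> 0\<close> (which keeps
  \<open>\<surd>a\<^sub>n - \<surd>b\<^sub>n\<close> away from \<open>0\<close>, hence \<open>t/(t-1)\<close> bounded).
\<close>

section \<open>Moments and collision probability of the binomial distribution\<close>

lemma binom_pmf_nonneg: "0 \<le> r \<Longrightarrow> r \<le> 1 \<Longrightarrow> 0 \<le> binom_pmf n r k"
  by (simp add: binom_pmf_def)

lemma sum_binom_pmf: "(\<Sum>k\<le>n. binom_pmf n r k) = 1"
  using binomial_ring[of r "1 - r" n] by (simp add: binom_pmf_def atLeast0AtMost)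

lemma binom_pmf_absorption:
  "real (Suc k) * binom_pmf (Suc m) r (Suc k) = real (Suc m) * r * binom_pmf m r k"
proof -
  have "real (Suc k) * real (Suc m choose Suc k) = real (Suc m) * real (m choose k)"
    using binomial_absorption[of k "Suc m"] by (metis diff_Suc_1 of_nat_mult)
  then show ?thesis
    by (simp add: binom_pmf_def mult_ac del: of_nat_Suc binomial_Suc_Suc)
qed

lemma sum_binom_pmf_Suc_shift:
  assumes "f 0 = 0"
  shows "(\<Sum>k\<le>Suc m. f k * binom_pmf (Suc m) r k)
           = (\<Sum>k\<le>m. f (Suc k) * binom_pmf (Suc m) r (Suc k))"
  by (subst sum.atMost_Suc_shift) (simp add: assms)

lemma binom_pmf_mean: "(\<Sum>k\<le>n. real k * binom_pmf n r k) = real n * r"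
proof (cases n)
  case (Suc m)
  have "(\<Sum>k\<le>Suc m. real k * binom_pmf (Suc m) r k) = (\<Sum>k\<le>m. real (Suc m) * r * binom_pmf m r k)"
    by (simp only: sum_binom_pmf_Suc_shift[of real] of_nat_0 binom_pmf_absorption)
  also have "\<dots> = real (Suc m) * r"
    by (simp only: sum_distrib_left[symmetric] sum_binom_pmf mult_1_right)
  finally show ?thesis using Suc by simp
qed simp

lemma binom_pmf_second_factorial_moment:
  "(\<Sum>k\<le>n. real k * (real k - 1) * binom_pmf n r k) = real n * (real n - 1) * r\<^sup>2"
proof (cases n)
  case (Suc m)
  have "(\<Sum>k\<le>Suc m. real k * (real k - 1) * binom_pmf (Suc m) r k)
      = (\<Sum>k\<le>m. real k * (real (Suc k) * binom_pmf (Suc m) r (Suc k)))"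
    by (subst sum_binom_pmf_Suc_shift) (simp_all add: ac_simps)
  also have "\<dots> = real (Suc m) * r * (\<Sum>k\<le>m. real k * binom_pmf m r k)"
    by (simp only: binom_pmf_absorption sum_distrib_left ac_simps)
  also have "\<dots> = real (Suc m) * r * (real m * r)"
    by (simp only: binom_pmf_mean)
  finally show ?thesis using Suc by (simp add: power2_eq_square algebra_simps)
qed simp

lemma binom_pmf_variance:
  "(\<Sum>k\<le>n. (real k - real n * r)\<^sup>2 * binom_pmf n r k) = real n * r * (1 - r)"
proof -
  have "(real k - real n * r)\<^sup>2 * binom_pmf n r k
      = real k * (real k - 1) * binom_pmf n r k + (1 - 2 * (real n * r)) * (real k * binom_pmf n r k)
        + (real n * r)\<^sup>2 * binom_pmf n r k" for k
    by (simp add: power2_eq_square algebra_simps)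
  then have "(\<Sum>k\<le>n. (real k - real n * r)\<^sup>2 * binom_pmf n r k)
      = (\<Sum>k\<le>n. real k * (real k - 1) * binom_pmf n r k)
        + (1 - 2 * (real n * r)) * (\<Sum>k\<le>n. real k * binom_pmf n r k)
        + (real n * r)\<^sup>2 * (\<Sum>k\<le>n. binom_pmf n r k)"
    by (simp only: sum.distrib sum_distrib_left)
  also have "\<dots> = real n * r * (1 - r)"
    by (simp only: binom_pmf_second_factorial_moment binom_pmf_mean sum_binom_pmf)
      (simp add: power2_eq_square algebra_simps)
  finally show ?thesis .
qed

lemma binom_pmf_tail_le:
  assumes r: "0 \<le> r" "r \<le> 1" and h: "h > 0"
  shows "(\<Sum>k\<in>{k\<in>{..n}. h\<^sup>2 < (real k - real n * r)\<^sup>2}. binom_pmf n r k)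
           \<le> real n * r * (1 - r) / h\<^sup>2"
proof -
  let ?T = "{k\<in>{..n}. h\<^sup>2 < (real k - real n * r)\<^sup>2}"
  have "(\<Sum>k\<in>?T. binom_pmf n r k) \<le> (\<Sum>k\<in>?T. (real k - real n * r)\<^sup>2 / h\<^sup>2 * binom_pmf n r k)"
  proof (intro sum_mono)
    fix k assume "k \<in> ?T"
    then have "1 \<le> (real k - real n * r)\<^sup>2 / h\<^sup>2" using h by simp
    from mult_right_mono[OF this binom_pmf_nonneg[OF r]]
    show "binom_pmf n r k \<le> (real k - real n * r)\<^sup>2 / h\<^sup>2 * binom_pmf n r k" by simp
  qed
  also have "\<dots> \<le> (\<Sum>k\<le>n. (real k - real n * r)\<^sup>2 / h\<^sup>2 * binom_pmf n r k)"
    using binom_pmf_nonneg[OF r] by (intro sum_mono2) auto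
  also have "\<dots> = real n * r * (1 - r) / h\<^sup>2"
    by (simp add: sum_divide_distrib[symmetric] binom_pmf_variance)
  finally show ?thesis .
qed

lemma card_nat_near_le:
  assumes "h \<ge> 0" and near: "\<And>k. k \<in> W \<Longrightarrow> \<bar>real k - \<mu>\<bar> \<le> h"
  shows "real (card W) \<le> 2 * h + 2"
proof -
  define a where "a = nat \<lceil>\<mu> - h\<rceil>"
  define M where "M = nat \<lceil>2 * h + 1\<rceil>"
  have "W \<subseteq> {a..<a + M}"
  proof
    fix k assume "k \<in> W"
    then have k1: "\<mu> - h \<le> real k" and k2: "real k \<le> \<mu> + h" using near by fastforce+
    have "a \<le> k" unfolding a_def using k1 by (simp add: nat_le_iff ceiling_le_iff)
    moreover have "real k < real a + real M"
      using real_nat_ceiling_ge[of "\<mu> - h"] real_nat_ceiling_ge[of "2 * h + 1"] k2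
      unfolding a_def M_def by linarith
    ultimately show "k \<in> {a..<a + M}" by simp
  qed
  then have "card W \<le> M"
    using card_mono[of "{a..<a + M}"] by simp
  moreover have "real M \<le> 2 * h + 2"
    using assms ceiling_correct[of "2 * h + 1"] unfolding M_def by simp
  ultimately show ?thesis by (meson of_nat_le_iff order_trans)
qed

text \<open>Chebyshev puts mass \<open>3/4\<close> on the \<open>O(\<surd>(nr))\<close> points within two standard deviations of the
  mean; Cauchy--Schwarz on those points gives the bound.\<close>
lemma binom_collision_ge:
  fixes r :: real
  assumes r: "0 < r" "r < 1" and nr: "real n * r \<ge> 1"
  shows "(\<Sum>k\<le>n. (binom_pmf n r k)\<^sup>2) \<ge> 1 / (11 * sqrt (real n * r))"
proof -
  define R where "R = binom_pmf n r"
  define \<mu> where "\<mu> = real n * r"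
  define v where "v = real n * r * (1 - r)"
  define h where "h = 2 * sqrt v"
  define W where "W = {k\<in>{..n}. (real k - \<mu>)\<^sup>2 \<le> h\<^sup>2}"
  have vpos: "v > 0" using r nr by (simp add: v_def)
  have hpos: "h > 0" and h2: "h\<^sup>2 = 4 * v"
    using vpos by (simp_all add: h_def power_mult_distrib)
  have "(\<Sum>k\<in>{..n} - W. R k) \<le> v / h\<^sup>2"
  proof -
    have "{..n} - W = {k\<in>{..n}. h\<^sup>2 < (real k - \<mu>)\<^sup>2}" by (auto simp: W_def)
    then show ?thesis
      using binom_pmf_tail_le[of r h n] r hpos by (simp add: R_def \<mu>_def v_def)
  qed
  moreover have "(\<Sum>k\<in>{..n} - W. R k) + (\<Sum>k\<in>W. R k) = 1"
    by (subst sum.subset_diff[symmetric]) (auto simp: W_def R_def sum_binom_pmf)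
  ultimately have mass: "(\<Sum>k\<in>W. R k) \<ge> 3/4" using vpos h2 by simp
  have "real (card W) \<le> 2 * h + 2"
    using hpos by (intro card_nat_near_le[of h W \<mu>]) (auto simp: W_def abs_le_square_iff[symmetric])
  moreover have "h \<le> 2 * sqrt (real n * r)"
    using r by (simp add: h_def v_def mult_left_le)
  moreover have "sqrt (real n * r) \<ge> 1" using nr by simp
  ultimately have cardW: "real (card W) \<le> 6 * sqrt (real n * r)" by linarith
  have "(3/4)\<^sup>2 \<le> (\<Sum>k\<in>W. R k)\<^sup>2" using mass by (intro power_mono) auto
  also have "\<dots> \<le> (\<Sum>k\<in>W. (R k)\<^sup>2) * card W" by (rule sum_squared_le_sum_of_squares)
  also have "\<dots> \<le> (\<Sum>k\<in>W. (R k)\<^sup>2) * (6 * sqrt (real n * r))"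
    using cardW by (intro mult_left_mono sum_nonneg) auto
  finally have "(\<Sum>k\<in>W. (R k)\<^sup>2) \<ge> 1 / (11 * sqrt (real n * r))"
    using nr by (simp add: field_simps power2_eq_square)
  also have "(\<Sum>k\<in>W. (R k)\<^sup>2) \<le> (\<Sum>k\<le>n. (R k)\<^sup>2)" by (intro sum_mono2) (auto simp: W_def)
  finally show ?thesis by (simp add: R_def)
qed

section \<open>Poisson weights and the maximum of the binomial pmf\<close>

lemma fact_diff_mult_pow_le: "i \<le> k \<Longrightarrow> fact (k - i) * (k + 1 - i) ^ i \<le> (fact k :: nat)"
proof (induction i)
  case (Suc i)
  have "k - i = Suc (k - Suc i)" using Suc.prems by simp
  then have "fact (k - Suc i) * (k + 1 - Suc i) ^ Suc i = fact (k - i) * (k - i) ^ i"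
    by (simp add: algebra_simps)
  also have "\<dots> \<le> fact (k - i) * (k + 1 - i) ^ i"
    by (intro mult_left_mono power_mono) auto
  also have "\<dots> \<le> fact k" using Suc by simp
  finally show ?case .
qed simp

lemma fact_add_le_mult_pow: "fact (k + i) \<le> fact k * (k + i) ^ i"
proof (induction i)
  case (Suc i)
  have "fact (k + Suc i) = (k + Suc i) * fact (k + i)" by simp
  also have "\<dots> \<le> (k + Suc i) * (fact k * (k + i) ^ i)" using Suc.IH by (rule mult_left_mono) simp
  also have "\<dots> \<le> (k + Suc i) * (fact k * (k + Suc i) ^ i)"
    by (intro mult_left_mono power_mono) auto
  also have "\<dots> = fact k * (k + Suc i) ^ Suc i" by (simp add: algebra_simps)
  finally show ?case .
qed simp

lemma sum_poisson_pmf_le_one: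
  fixes lam :: real
  assumes "lam \<ge> 0" "finite A"
  shows "(\<Sum>j\<in>A. lam ^ j / fact j * exp (- lam)) \<le> 1"
proof -
  have "(\<lambda>j. inverse (fact j) * lam ^ j) sums exp lam"
    using exp_converges[of lam] by (simp add: scaleR_conv_of_real)
  then have "(\<Sum>j\<in>A. inverse (fact j) * lam ^ j) \<le> exp lam"
    using assms sum_le_suminf[of "\<lambda>j. inverse (fact j) * lam ^ j" A] by (auto simp: sums_iff)
  then have "(\<Sum>j\<in>A. lam ^ j / fact j) * exp (- lam) \<le> exp lam * exp (- lam)"
    by (intro mult_right_mono) (auto simp: field_simps)
  then show ?thesis by (simp add: sum_distrib_right exp_minus)
qed

lemma mult_le_of_dominated_points:
  fixes P :: "nat \<Rightarrow> real"
  assumes total: "\<And>A. finite A \<Longrightarrow> (\<Sum>j\<in>A. P j) \<le> 1"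
    and inj: "inj_on h {..I}" and dom: "\<And>i. i \<le> I \<Longrightarrow> P k \<le> c * P (h i)" and c: "c > 0"
  shows "(real I + 1) * P k \<le> c"
proof -
  have "(real I + 1) * P k = (\<Sum>i\<le>I. P k)" by simp
  also have "\<dots> \<le> (\<Sum>i\<le>I. c * P (h i))" using dom by (intro sum_mono) auto
  also have "\<dots> = c * (\<Sum>j\<in>h ` {..I}. P j)" by (simp add: sum.reindex[OF inj] sum_distrib_left)
  also have "\<dots> \<le> c" using total[of "h ` {..I}"] c by simp
  finally show ?thesis .
qed

lemma poisson_weight_le_shift_down:
  fixes lam :: real
  assumes lam: "0 \<le> lam" "lam \<le> real k + 1" and ik: "i \<le> k"
    and i: "4 * real i ^ 2 \<le> real k + 1"
  shows "lam ^ k / fact k \<le> 4/3 * (lam ^ (k - i) / fact (k - i))"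
proof -
  have "3/4 \<le> 1 - real i * (real i / (real k + 1))"
    using i by (simp add: power2_eq_square field_simps)
  also have "\<dots> \<le> (1 - real i / (real k + 1)) ^ i"
    using Bernoulli_inequality[of "- (real i / (real k + 1))" i] ik by simp
  also have "1 - real i / (real k + 1) = real (k + 1 - i) / (real k + 1)"
    using ik by (simp add: field_simps of_nat_diff)
  finally have "(real k + 1) ^ i \<le> 4/3 * real (k + 1 - i) ^ i"
    by (simp add: power_divide field_simps)
  moreover have "lam ^ i \<le> (real k + 1) ^ i" using lam by (intro power_mono) auto
  ultimately have "lam ^ i * fact (k - i) \<le> 4/3 * real (k + 1 - i) ^ i * fact (k - i)"
    by (intro mult_right_mono) auto
  also have "\<dots> \<le> 4/3 * fact k"
  proof -
    have "real (fact (k - i) * (k + 1 - i) ^ i) \<le> real (fact k)"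
      using fact_diff_mult_pow_le[OF ik] by (simp only: of_nat_le_iff)
    then show ?thesis by (simp add: algebra_simps)
  qed
  finally have key: "lam ^ i * fact (k - i) \<le> 4/3 * fact k" .
  have "lam ^ k / fact k = lam ^ (k - i) * (lam ^ i * fact (k - i)) / (fact k * fact (k - i))"
    using ik by (simp add: power_add[symmetric] field_simps)
  also have "\<dots> \<le> lam ^ (k - i) * (4/3 * fact k) / (fact k * fact (k - i))"
    using key lam by (intro divide_right_mono mult_left_mono) auto
  also have "\<dots> = 4/3 * (lam ^ (k - i) / fact (k - i))" by (simp add: field_simps)
  finally show ?thesis .
qed

lemma poisson_weight_le_shift_up:
  fixes lam :: real
  assumes lam: "lam > 0" "real k \<le> lam" and i: "4 * real i ^ 2 \<le> lam"
  shows "lam ^ k / fact k \<le> 4/3 * (lam ^ (k + i) / fact (k + i))"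
proof -
  have "real i * (real i / (lam + i)) \<le> real i ^ 2 / lam"
    using lam by (simp add: power2_eq_square frac_le)
  moreover have "real i ^ 2 / lam \<le> 1/4" using i lam by (simp add: field_simps)
  ultimately have "3/4 \<le> 1 - real i * (real i / (lam + i))" by linarith
  also have "\<dots> \<le> (1 - real i / (lam + i)) ^ i"
    using Bernoulli_inequality[of "- (real i / (lam + i))" i] lam by simp
  also have "1 - real i / (lam + i) = lam / (lam + i)" using lam by (simp add: field_simps)
  finally have growth: "(lam + i) ^ i \<le> 4/3 * lam ^ i" using lam by (simp add: power_divide field_simps)
  have "real (fact (k + i)) \<le> real (fact k * (k + i) ^ i)"
    using fact_add_le_mult_pow[of k i] by (simp only: of_nat_le_iff)
  then have "fact (k + i) \<le> fact k * real (k + i) ^ i" by simp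
  also have "\<dots> \<le> fact k * (lam + i) ^ i"
    using lam by (intro mult_left_mono power_mono) auto
  also have "\<dots> \<le> fact k * (4/3 * lam ^ i)" using growth by (intro mult_left_mono) auto
  finally have key: "fact (k + i) \<le> 4/3 * lam ^ i * fact k" by (simp add: algebra_simps)
  have "lam ^ k / fact k = lam ^ k * fact (k + i) / (fact k * fact (k + i))" by simp
  also have "\<dots> \<le> lam ^ k * (4/3 * lam ^ i * fact k) / (fact k * fact (k + i))"
    using key lam by (intro divide_right_mono mult_left_mono) auto
  also have "\<dots> = 4/3 * (lam ^ (k + i) / fact (k + i))" by (simp add: field_simps power_add)
  finally show ?thesis .
qed

lemma poisson_pmf_le_of_window:
  fixes lam :: real
  assumes lam: "lam \<ge> 1" and I: "sqrt lam / 2 \<le> real I + 1" and inj: "inj_on h {..I}"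
    and dom: "\<And>i. i \<le> I \<Longrightarrow> lam ^ k / fact k \<le> 4/3 * (lam ^ h i / fact (h i))"
  shows "lam ^ k / fact k * exp (- lam) \<le> 3 / sqrt lam"
proof -
  define P where "P j = lam ^ j / fact j * exp (- lam)" for j
  have "(real I + 1) * P k \<le> 4/3"
  proof (rule mult_le_of_dominated_points[OF _ inj])
    show "(\<Sum>j\<in>A. P j) \<le> 1" if "finite A" for A
      unfolding P_def using lam that by (intro sum_poisson_pmf_le_one) auto
    show "P k \<le> 4/3 * P (h i)" if "i \<le> I" for i
      using mult_right_mono[OF dom[OF that] exp_ge_zero[of "- lam"]] by (simp add: P_def mult.assoc)
  qed simp
  moreover have "sqrt lam / 2 * P k \<le> (real I + 1) * P k"
    using I lam by (intro mult_right_mono) (auto simp: P_def)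
  ultimately have "sqrt lam * P k \<le> 8/3" by linarith
  then have "P k \<le> 3 / sqrt lam" using lam by (simp add: field_simps)
  then show ?thesis by (simp add: P_def)
qed

lemma nat_floor_bracket: "0 \<le> x \<Longrightarrow> \<exists>I::nat. real I \<le> x \<and> x < real I + 1"
  by (rule exI[of _ "nat \<lfloor>x\<rfloor>"]) (use floor_correct[of x] in auto)

text \<open>Within \<open>\<surd>\<lambda>/2\<close> of a given point the Poisson weights vary by at most a factor \<open>4/3\<close>.\<close>
lemma poisson_pmf_le:
  fixes lam :: real
  assumes lam: "lam \<ge> 1"
  shows "lam ^ k / fact k * exp (- lam) \<le> 3 / sqrt lam"
proof (cases "lam \<le> real k + 1")
  case True
  obtain I :: nat where I: "real I \<le> sqrt (real k + 1) / 2" "sqrt (real k + 1) / 2 < real I + 1"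
    using nat_floor_bracket[of "sqrt (real k + 1) / 2"] by auto
  have small: "4 * real i ^ 2 \<le> real k + 1" if "i \<le> I" for i
    using power_mono[of "real i" "sqrt (real k + 1) / 2" 2] I(1) that by (simp add: power_divide)
  have "real I \<le> real I ^ 2" by (metis le_square of_nat_le_iff of_nat_mult power2_eq_square)
  then have "real I < real k + 1" using small[of I] by linarith
  then have "I \<le> k" by (metis of_nat_1 of_nat_add of_nat_less_iff less_Suc_eq_le Suc_eq_plus1)
  show ?thesis
  proof (rule poisson_pmf_le_of_window[OF lam, of I "\<lambda>i. k - i"])
    have "sqrt lam \<le> sqrt (real k + 1)" using True by simp
    then show "sqrt lam / 2 \<le> real I + 1" using I(2) by linarith
    show "inj_on (\<lambda>i. k - i) {..I}" using \<open>I \<le> k\<close> by (auto simp: inj_on_def)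
    show "lam ^ k / fact k \<le> 4/3 * (lam ^ (k - i) / fact (k - i))" if "i \<le> I" for i
      using that \<open>I \<le> k\<close> True lam small[OF that] by (intro poisson_weight_le_shift_down) auto
  qed
next
  case False
  obtain I :: nat where I: "real I \<le> sqrt lam / 2" "sqrt lam / 2 < real I + 1"
    using nat_floor_bracket[of "sqrt lam / 2"] lam by auto
  show ?thesis
  proof (rule poisson_pmf_le_of_window[OF lam, of I "\<lambda>i. k + i"])
    show "sqrt lam / 2 \<le> real I + 1" using I(2) by simp
    show "inj_on (\<lambda>i. k + i) {..I}" by (auto simp: inj_on_def)
    show "lam ^ k / fact k \<le> 4/3 * (lam ^ (k + i) / fact (k + i))" if "i \<le> I" for i
    proof (rule poisson_weight_le_shift_up)
      show "4 * real i ^ 2 \<le> lam"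
        using power_mono[of "real i" "sqrt lam / 2" 2] I(1) that lam by (simp add: power_divide)
    qed (use False lam in auto)
  qed
qed

lemma binom_pmf_le_poisson:
  fixes r :: real
  assumes r: "0 \<le> r" "r < 1" and k: "k \<le> n"
  shows "binom_pmf n r k \<le> (real n * r / (1 - r)) ^ k / fact k * (1 - r) ^ n"
proof -
  have "fact n div fact (n - k) = (n choose k) * fact k"
    using binomial_fact_lemma[OF k] by (metis mult.assoc mult.commute nonzero_mult_div_cancel_right fact_nonzero)
  then have "(n choose k) * fact k \<le> n ^ k" using fact_div_fact_le_pow[OF k] by simp
  then have "real (n choose k) * fact k \<le> real n ^ k"
    by (metis of_nat_fact of_nat_le_iff of_nat_mult of_nat_power)
  then have "real (n choose k) \<le> real n ^ k / fact k" by (simp add: field_simps)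
  then have "binom_pmf n r k \<le> real n ^ k / fact k * r ^ k * (1 - r) ^ (n - k)"
    unfolding binom_pmf_def using r by (intro mult_right_mono) auto
  also have "\<dots> = (real n * r / (1 - r)) ^ k / fact k * ((1 - r) ^ (n - k) * (1 - r) ^ k)"
    using r by (simp add: power_divide power_mult_distrib)
  also have "(1 - r) ^ (n - k) * (1 - r) ^ k = (1 - r) ^ n"
    using k by (simp add: power_add[symmetric])
  finally show ?thesis .
qed

lemma binom_collision_le:
  fixes r :: real
  assumes r: "0 < r" "r \<le> 1/2" and nr: "real n * r \<ge> 1" and nr2: "real n * r\<^sup>2 \<le> 1/2"
  shows "(\<Sum>k\<le>n. (binom_pmf n r k)\<^sup>2) \<le> 3 * exp 1 / sqrt (real n * r)"
proof -
  define lam where "lam = real n * r / (1 - r)"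
  define M where "M = 3 * exp 1 / sqrt (real n * r)"
  have lam_ge: "lam \<ge> real n * r" unfolding lam_def using r nr by (simp add: field_simps)
  have lam_diff: "lam - real n * r \<le> 1"
  proof -
    have "lam - real n * r = real n * r\<^sup>2 / (1 - r)"
      unfolding lam_def using r by (simp add: field_simps power2_eq_square)
    also have "\<dots> \<le> real n * r\<^sup>2 / (1/2)" using r nr2 by (intro divide_left_mono) auto
    finally show ?thesis using nr2 by simp
  qed
  have "(1 - r) ^ n \<le> exp (- r) ^ n"
    using r exp_ge_add_one_self[of "- r"] by (intro power_mono) auto
  then have one_minus_pow: "(1 - r) ^ n \<le> exp (- (real n * r))"
    by (simp add: exp_of_nat_mult[symmetric])
  have pmf_le: "binom_pmf n r k \<le> M" if "k \<le> n" for k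
  proof -
    have "binom_pmf n r k \<le> lam ^ k / fact k * (1 - r) ^ n"
      using binom_pmf_le_poisson[OF _ _ that] r unfolding lam_def by simp
    also have "\<dots> \<le> lam ^ k / fact k * exp (- (real n * r))"
      using one_minus_pow lam_ge nr by (intro mult_left_mono) auto
    also have "\<dots> = (lam ^ k / fact k * exp (- lam)) * exp (lam - real n * r)"
      by (simp add: exp_diff exp_minus field_simps)
    also have "\<dots> \<le> (3 / sqrt lam) * exp 1"
      using poisson_pmf_le[of lam k] lam_diff lam_ge nr by (intro mult_mono) auto
    also have "\<dots> \<le> 3 / sqrt (real n * r) * exp 1"
    proof -
      have "3 / sqrt lam \<le> 3 / sqrt (real n * r)"
        using lam_ge nr by (intro divide_left_mono real_sqrt_le_mono mult_pos_pos) auto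
      then show ?thesis by (intro mult_right_mono) auto
    qed
    finally show ?thesis by (simp add: M_def)
  qed
  have "(\<Sum>k\<le>n. (binom_pmf n r k)\<^sup>2) \<le> (\<Sum>k\<le>n. binom_pmf n r k * M)"
    using pmf_le binom_pmf_nonneg[of r] r
    by (intro sum_mono) (simp add: power2_eq_square mult_left_mono)
  also have "\<dots> = M" by (simp add: sum_distrib_right[symmetric] sum_binom_pmf)
  finally show ?thesis by (simp add: M_def)
qed

section \<open>Exponential tilting\<close>

definition bhattacharyya :: "real \<Rightarrow> real \<Rightarrow> real" where
  "bhattacharyya p q = sqrt (p * q) + sqrt ((1 - p) * (1 - q))"

definition tilted_prob :: "real \<Rightarrow> real \<Rightarrow> real" where
  "tilted_prob p q = sqrt (p * q) / bhattacharyya p q"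

definition tilt_ratio :: "real \<Rightarrow> real \<Rightarrow> real" where
  "tilt_ratio p q = sqrt (p * (1 - q)) / sqrt (q * (1 - p))"

definition tilted_sum :: "real \<Rightarrow> (nat \<Rightarrow> real) \<Rightarrow> nat \<Rightarrow> real" where
  "tilted_sum t R n = (\<Sum>x\<le>n. \<Sum>y\<le>n. if x \<le> y then t ^ x / t ^ y * R x * R y else 0)"

lemma binom_pmf_tilt:
  assumes "x \<le> n" and "p = r * t * s" and "1 - p = (1 - r) * s"
  shows "binom_pmf n p x = binom_pmf n r x * t ^ x * s ^ n"
proof -
  have "s ^ n = s ^ x * s ^ (n - x)" using assms(1) by (simp add: power_add[symmetric])
  moreover have "p ^ x = r ^ x * t ^ x * s ^ x" using assms(2) by (simp add: power_mult_distrib)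
  moreover have "(1 - p) ^ (n - x) = (1 - r) ^ (n - x) * s ^ (n - x)"
    using assms(3) by (simp add: power_mult_distrib)
  ultimately show ?thesis by (simp add: binom_pmf_def algebra_simps)
qed

lemma sqrt_mult_eq_of_square_factor:
  fixes a b c d :: real
  assumes "a * b = c\<^sup>2 * d" "c \<ge> 0"
  shows "sqrt a * sqrt b = c * sqrt d"
  using assms by (simp add: real_sqrt_mult[symmetric] real_sqrt_mult)

lemma tilt_factors:
  assumes p: "0 < p" "p < 1" and q: "0 < q" "q < 1"
  defines "s \<equiv> bhattacharyya p q * (1 - p) / sqrt ((1 - p) * (1 - q))"
    and "s' \<equiv> bhattacharyya p q * (1 - q) / sqrt ((1 - p) * (1 - q))"
  shows "p = tilted_prob p q * tilt_ratio p q * s" "1 - p = (1 - tilted_prob p q) * s"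
    and "q = tilted_prob p q * (1 / tilt_ratio p q) * s'" "1 - q = (1 - tilted_prob p q) * s'"
    and "s * s' = bhattacharyya p q ^ 2"
proof -
  define d where "d = sqrt ((1 - p) * (1 - q))"
  define g where "g = sqrt (p * q)"
  define B where "B = bhattacharyya p q"
  have B_eq: "B = g + d" by (simp add: B_def bhattacharyya_def g_def d_def)
  have "d > 0" "g > 0" using p q by (simp_all add: d_def g_def)
  then have pos: "d > 0" "g > 0" "B > 0" by (simp_all add: B_eq)
  have r: "tilted_prob p q = g / B" by (simp add: tilted_prob_def B_def g_def)
  have one_minus_r: "1 - tilted_prob p q = d / B" using pos by (simp add: r B_eq field_simps)
  have roots: "sqrt (p * (1 - q)) * g = p * sqrt (q * (1 - q))"
    "sqrt (q * (1 - p)) * d = (1 - p) * sqrt (q * (1 - q))"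
    "sqrt (q * (1 - p)) * g = q * sqrt (p * (1 - p))"
    "sqrt (p * (1 - q)) * d = (1 - q) * sqrt (p * (1 - p))"
    unfolding g_def d_def using p q
    by (intro sqrt_mult_eq_of_square_factor; simp add: power2_eq_square algebra_simps)+
  have nz: "sqrt (q * (1 - q)) > 0" "sqrt (p * (1 - p)) > 0" "sqrt (q * (1 - p)) > 0"
    "sqrt (p * (1 - q)) > 0"
    using p q by auto
  have "tilted_prob p q * tilt_ratio p q * s
      = (sqrt (p * (1 - q)) * g) * (1 - p) / (sqrt (q * (1 - p)) * d)"
    using pos by (simp add: r s_def tilt_ratio_def B_def d_def)
  also have "\<dots> = p" using nz p q by (simp only: roots) simp
  finally show "p = tilted_prob p q * tilt_ratio p q * s" ..
  have "tilted_prob p q * (1 / tilt_ratio p q) * s'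
      = (sqrt (q * (1 - p)) * g) * (1 - q) / (sqrt (p * (1 - q)) * d)"
    using pos by (simp add: r s'_def tilt_ratio_def B_def d_def)
  also have "\<dots> = q" using nz p q by (simp only: roots) simp
  finally show "q = tilted_prob p q * (1 / tilt_ratio p q) * s'" ..
  show "1 - p = (1 - tilted_prob p q) * s" "1 - q = (1 - tilted_prob p q) * s'"
    using pos p q by (simp_all add: one_minus_r s_def s'_def B_def d_def)
  have "d * d = (1 - p) * (1 - q)" using p q by (simp add: d_def)
  then show "s * s' = bhattacharyya p q ^ 2"
    using pos p q by (simp add: s_def s'_def flip: d_def B_def) (simp add: field_simps power2_eq_square)
qed

lemma binom_pmf_product_tilt:
  assumes p: "0 < p" "p < 1" and q: "0 < q" "q < 1" and "x \<le> n" "y \<le> n"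
  shows "binom_pmf n p x * binom_pmf n q y = bhattacharyya p q ^ (2 * n)
           * (tilt_ratio p q ^ x / tilt_ratio p q ^ y)
           * binom_pmf n (tilted_prob p q) x * binom_pmf n (tilted_prob p q) y"
proof -
  define s where "s = bhattacharyya p q * (1 - p) / sqrt ((1 - p) * (1 - q))"
  define s' where "s' = bhattacharyya p q * (1 - q) / sqrt ((1 - p) * (1 - q))"
  let ?r = "tilted_prob p q" and ?t = "tilt_ratio p q"
  have "binom_pmf n p x * binom_pmf n q y
      = binom_pmf n ?r x * ?t ^ x * s ^ n * (binom_pmf n ?r y * (1 / ?t) ^ y * s' ^ n)"
    using binom_pmf_tilt[OF assms(5) tilt_factors(1,2)[OF p q]]
      binom_pmf_tilt[OF assms(6) tilt_factors(3,4)[OF p q]]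
    by (simp add: s_def s'_def)
  also have "\<dots> = (s * s') ^ n * (?t ^ x / ?t ^ y) * binom_pmf n ?r x * binom_pmf n ?r y"
    by (simp add: power_mult_distrib power_divide field_simps)
  also have "(s * s') ^ n = bhattacharyya p q ^ (2 * n)"
    using tilt_factors(5)[OF p q] by (simp add: s_def s'_def power_mult)
  finally show ?thesis .
qed

lemma Pnpq_eq_tilted_sum:
  assumes q: "0 < q" and qp: "q \<le> p" and p: "p < 1"
  shows "Pnpq n p q = bhattacharyya p q ^ (2 * n)
           * tilted_sum (tilt_ratio p q) (binom_pmf n (tilted_prob p q)) n"
proof -
  have mx: "max p q = p" "min p q = q" using qp by auto
  have "Pnpq n p q = (\<Sum>x\<le>n. \<Sum>y\<le>n. if x \<le> y then binom_pmf n p x * binom_pmf n q y else 0)"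
    unfolding Pnpq_def Pmnpq_def mx ..
  also have "\<dots> = (\<Sum>x\<le>n. \<Sum>y\<le>n. bhattacharyya p q ^ (2 * n) * (if x \<le> y then
      tilt_ratio p q ^ x / tilt_ratio p q ^ y * binom_pmf n (tilted_prob p q) x
        * binom_pmf n (tilted_prob p q) y else 0))"
    using binom_pmf_product_tilt[of p q] q qp p by (intro sum.cong refl) (auto simp: algebra_simps)
  finally show ?thesis by (simp add: tilted_sum_def sum_distrib_left)
qed

lemma sum_power_inj_le:
  fixes u :: real
  assumes u: "0 \<le> u" "u < 1" and "finite S" and inj: "inj_on f S"
  shows "(\<Sum>s\<in>S. u ^ f s) \<le> 1 / (1 - u)"
proof -
  obtain N where N: "f ` S \<subseteq> {..<N}"
    using finite_nat_bounded[OF finite_imageI[OF \<open>finite S\<close>]] by blast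
  have "(\<Sum>s\<in>S. u ^ f s) = (\<Sum>d\<in>f ` S. u ^ d)" by (simp add: sum.reindex[OF inj])
  also have "\<dots> \<le> (\<Sum>d<N. u ^ d)" using N u by (intro sum_mono2) auto
  also have "\<dots> = (1 - u ^ N) / (1 - u)" using u by (simp add: sum_gp_strict)
  also have "\<dots> \<le> 1 / (1 - u)" using u by (intro divide_right_mono) auto
  finally show ?thesis .
qed

lemma sum_power_dist_le:
  fixes u :: real
  assumes "0 \<le> u" "u < 1"
  shows "(\<Sum>y\<le>n. if x \<le> y then u ^ (y - x) else 0) \<le> 1 / (1 - u)"
    and "(\<Sum>x\<le>n. if x \<le> y then u ^ (y - x) else 0) \<le> 1 / (1 - u)"
proof -
  have "(\<Sum>y\<le>n. if x \<le> y then u ^ (y - x) else 0) = (\<Sum>y\<in>{y\<in>{..n}. x \<le> y}. u ^ (y - x))"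
    by (subst sum.inter_filter) auto
  also have "\<dots> \<le> 1 / (1 - u)" by (rule sum_power_inj_le[OF assms]) (auto simp: inj_on_def)
  finally show "(\<Sum>y\<le>n. if x \<le> y then u ^ (y - x) else 0) \<le> 1 / (1 - u)" .
  have "(\<Sum>x\<le>n. if x \<le> y then u ^ (y - x) else 0) = (\<Sum>x\<in>{x\<in>{..n}. x \<le> y}. u ^ (y - x))"
    by (subst sum.inter_filter) auto
  also have "\<dots> \<le> 1 / (1 - u)" by (rule sum_power_inj_le[OF assms]) (auto simp: inj_on_def)
  finally show "(\<Sum>x\<le>n. if x \<le> y then u ^ (y - x) else 0) \<le> 1 / (1 - u)" .
qed

lemma tilted_sum_ge:
  assumes t: "t > 0" and R: "\<And>k. R k \<ge> 0"
  shows "(\<Sum>k\<le>n. (R k)\<^sup>2) \<le> tilted_sum t R n"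
  unfolding tilted_sum_def
proof (intro sum_mono)
  fix x assume "x \<in> {..n}"
  then have "(if x \<le> x then t ^ x / t ^ x * R x * R x else 0)
      \<le> (\<Sum>y\<le>n. if x \<le> y then t ^ x / t ^ y * R x * R y else 0)"
    using t R by (intro member_le_sum) auto
  then show "(R x)\<^sup>2 \<le> (\<Sum>y\<le>n. if x \<le> y then t ^ x / t ^ y * R x * R y else 0)"
    using t by (simp add: power2_eq_square)
qed

text \<open>Bound \<open>R x R y\<close> by \<open>(R x\<^sup>2 + R y\<^sup>2)/2\<close>; each square then meets a geometric series in
  \<open>1/t\<close>.\<close>
lemma tilted_sum_le:
  assumes t: "t > 1" and R: "\<And>k. R k \<ge> 0"
  shows "tilted_sum t R n \<le> t / (t - 1) * (\<Sum>k\<le>n. (R k)\<^sup>2)"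
proof -
  define u where "u = 1 / t"
  define w where "w x y = (if x \<le> y then u ^ (y - x) else 0)" for x y
  have u: "0 \<le> u" "u < 1" using t by (auto simp: u_def)
  have geo: "1 / (1 - u) = t / (t - 1)" using t by (simp add: u_def field_simps)
  have row: "(\<Sum>y\<le>n. w x y) \<le> t / (t - 1)" and col: "(\<Sum>x\<le>n. w x y) \<le> t / (t - 1)" for x y
    unfolding w_def geo[symmetric] using sum_power_dist_le[OF u] by blast+
  have "tilted_sum t R n \<le> (\<Sum>x\<le>n. \<Sum>y\<le>n. w x y * ((R x)\<^sup>2 / 2) + w x y * ((R y)\<^sup>2 / 2))"
    unfolding tilted_sum_def
  proof (intro sum_mono)
    fix x y
    have "R x * R y \<le> (R x)\<^sup>2 / 2 + (R y)\<^sup>2 / 2"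
      using sum_squares_bound[of "R x" "R y"] by (simp add: power2_eq_square)
    then have "u ^ (y - x) * (R x * R y) \<le> u ^ (y - x) * ((R x)\<^sup>2 / 2 + (R y)\<^sup>2 / 2)"
      using u by (intro mult_left_mono) auto
    moreover have "t ^ x / t ^ y = u ^ (y - x)" if "x \<le> y"
      using that t by (simp add: u_def power_one_over power_diff)
    ultimately show "(if x \<le> y then t ^ x / t ^ y * R x * R y else 0)
        \<le> w x y * ((R x)\<^sup>2 / 2) + w x y * ((R y)\<^sup>2 / 2)"
      by (auto simp: w_def algebra_simps)
  qed
  also have "\<dots> = (\<Sum>x\<le>n. (\<Sum>y\<le>n. w x y) * ((R x)\<^sup>2 / 2)) + (\<Sum>y\<le>n. (\<Sum>x\<le>n. w x y) * ((R y)\<^sup>2 / 2))"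
  proof -
    have "(\<Sum>x\<le>n. \<Sum>y\<le>n. w x y * ((R y)\<^sup>2 / 2)) = (\<Sum>y\<le>n. \<Sum>x\<le>n. w x y * ((R y)\<^sup>2 / 2))"
      by (rule sum.swap)
    then show ?thesis by (simp only: sum.distrib sum_distrib_right)
  qed
  also have "\<dots> \<le> (\<Sum>x\<le>n. t / (t - 1) * ((R x)\<^sup>2 / 2)) + (\<Sum>y\<le>n. t / (t - 1) * ((R y)\<^sup>2 / 2))"
    by (intro add_mono sum_mono mult_right_mono row col) auto
  also have "\<dots> = t / (t - 1) * (\<Sum>k\<le>n. (R k)\<^sup>2)"
    by (simp only: sum_distrib_left[symmetric] sum_divide_distrib[symmetric])
  finally show ?thesis .
qed

lemma bhattacharyya_nonneg: "0 \<le> p \<Longrightarrow> p \<le> 1 \<Longrightarrow> 0 \<le> q \<Longrightarrow> q \<le> 1 \<Longrightarrow> 0 \<le> bhattacharyya p q"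
  by (simp add: bhattacharyya_def)

lemma bhattacharyya_le:
  assumes "0 \<le> p" "p \<le> 1" "0 \<le> q" "q \<le> 1"
  shows "bhattacharyya p q \<le> 1 - (sqrt p - sqrt q)\<^sup>2 / 2"
proof -
  have "bhattacharyya p q = sqrt p * sqrt q + sqrt ((1 - p) * (1 - q))"
    by (simp add: bhattacharyya_def real_sqrt_mult)
  also have "\<dots> \<le> sqrt p * sqrt q + ((1 - p) + (1 - q)) / 2"
    using arith_geo_mean_sqrt[of "1 - p" "1 - q"] assms by simp
  also have "\<dots> = 1 - (sqrt p - sqrt q)\<^sup>2 / 2"
    using assms by (simp add: power2_diff field_simps)
  finally show ?thesis .
qed

lemma bhattacharyya_power_le:
  assumes "0 \<le> p" "p \<le> 1" "0 \<le> q" "q \<le> 1"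
  shows "bhattacharyya p q ^ (2 * n) \<le> exp (- (real n * (sqrt p - sqrt q)\<^sup>2))"
proof -
  have "bhattacharyya p q ^ (2 * n) \<le> exp (- ((sqrt p - sqrt q)\<^sup>2 / 2)) ^ (2 * n)"
    using bhattacharyya_le[OF assms] exp_ge_add_one_self[of "- ((sqrt p - sqrt q)\<^sup>2 / 2)"]
      bhattacharyya_nonneg[OF assms]
    by (intro power_mono) auto
  also have "\<dots> = exp (- (real n * (sqrt p - sqrt q)\<^sup>2))"
    by (simp add: exp_of_nat_mult[symmetric])
  finally show ?thesis .
qed

lemma bhattacharyya_ge:
  assumes q: "0 \<le> q" and qp: "q \<le> p" and p: "p \<le> 1/4"
  shows "bhattacharyya p q \<ge> 1 - ((sqrt p - sqrt q)\<^sup>2 / 2 + (p - q)\<^sup>2 / 4)"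
proof -
  define A where "A = 1 - (p + q) / 2"
  define d where "d = (p - q) / 2"
  have d2: "d\<^sup>2 \<le> 1/64"
    using power_mono[of d "1/8" 2] q qp p by (simp add: d_def power2_eq_square)
  have A: "2 * A - 1 \<ge> 1/2" using q qp p by (simp add: A_def)
  have "A\<^sup>2 - d\<^sup>2 - (A - d\<^sup>2)\<^sup>2 = d\<^sup>2 * ((2 * A - 1) - d\<^sup>2)"
    by (simp add: power2_eq_square algebra_simps)
  also have "\<dots> \<ge> 0" using A d2 by (intro mult_nonneg_nonneg) auto
  finally have "sqrt ((A - d\<^sup>2)\<^sup>2) \<le> sqrt (A\<^sup>2 - d\<^sup>2)" by (intro real_sqrt_le_mono) simp
  moreover have "(1 - p) * (1 - q) = A\<^sup>2 - d\<^sup>2"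
    by (simp add: A_def d_def power2_eq_square field_simps)
  ultimately have "A - d\<^sup>2 \<le> sqrt ((1 - p) * (1 - q))" using A d2 by simp
  moreover have "bhattacharyya p q = sqrt p * sqrt q + sqrt ((1 - p) * (1 - q))"
    by (simp add: bhattacharyya_def real_sqrt_mult)
  moreover have "1 - ((sqrt p - sqrt q)\<^sup>2 / 2 + (p - q)\<^sup>2 / 4) = sqrt p * sqrt q + (A - d\<^sup>2)"
    using q qp by (simp add: A_def d_def power2_diff power_divide field_simps)
  ultimately show ?thesis by linarith
qed

lemma tilt_ratio_ge:
  assumes q: "0 < q" and qp: "q \<le> p" and p: "p < 1"
  shows "sqrt p / sqrt q \<le> tilt_ratio p q"
proof -
  have "p * (1 - p) \<le> p * (1 - q)" "q * (1 - p) \<le> p * (1 - p)"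
    using q qp p by (auto intro!: mult_left_mono mult_right_mono)
  then have "p / q \<le> p * (1 - q) / (q * (1 - p))" using q qp p by (simp add: field_simps)
  then have "sqrt (p / q) \<le> sqrt (p * (1 - q) / (q * (1 - p)))" by (rule real_sqrt_le_mono)
  then show ?thesis by (simp add: tilt_ratio_def real_sqrt_divide)
qed

lemma divide_diff_one_antimono:
  fixes s t :: real
  assumes "1 < s" "s \<le> t"
  shows "t / (t - 1) \<le> s / (s - 1)"
  using assms by (simp add: field_simps)

section \<open>Parameters of order \<open>log n / n\<close>\<close>

locale tilt_regime =
  fixes n :: nat and p q :: real
  assumes q_pos: "0 < q" and q_le_p: "q \<le> p" and p_le: "p \<le> 1/4"
    and n_sqrt_pq: "real n * sqrt (p * q) \<ge> 1" and n_pq: "real n * (p * q) \<le> 1/8"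
    and n_p2: "real n * p\<^sup>2 \<le> 1/5"
begin

lemma params: "0 < p" "p < 1" "0 < sqrt (p * q)" "sqrt (p * q) \<le> p"
proof -
  show "0 < p" "p < 1" "0 < sqrt (p * q)" using q_pos q_le_p p_le by auto
  have "sqrt (p * q) \<le> sqrt (p * p)"
    using q_pos q_le_p by (intro real_sqrt_le_mono mult_left_mono) auto
  then show "sqrt (p * q) \<le> p" using q_pos q_le_p by simp
qed

lemma bhattacharyya_between: "1/2 \<le> bhattacharyya p q" "bhattacharyya p q \<le> 1"
proof -
  have "bhattacharyya p q \<le> 1 - (sqrt p - sqrt q)\<^sup>2 / 2"
    using params q_pos q_le_p by (intro bhattacharyya_le) auto
  then show "bhattacharyya p q \<le> 1" using zero_le_power2[of "sqrt p - sqrt q"] by linarith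
  have "(3/4) * (3/4) \<le> (1 - p) * (1 - q)" using q_pos q_le_p p_le by (intro mult_mono) auto
  then have "1/2 \<le> sqrt ((1 - p) * (1 - q))"
    using real_sqrt_le_mono[of "1/4"] by (simp add: real_sqrt_divide)
  then show "1/2 \<le> bhattacharyya p q" unfolding bhattacharyya_def using params(3) by linarith
qed

lemma tilted_prob_between: "sqrt (p * q) \<le> tilted_prob p q" "tilted_prob p q \<le> 2 * sqrt (p * q)"
  using bhattacharyya_between params
  by (simp_all add: tilted_prob_def field_simps mult_left_le_one_le less_imp_le)

lemma tilted_prob_regime:
  "0 < tilted_prob p q" "tilted_prob p q < 1"
  "tilted_prob p q \<le> 1/2" "real n * tilted_prob p q \<ge> 1" "real n * (tilted_prob p q)\<^sup>2 \<le> 1/2"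
proof -
  show "0 < tilted_prob p q" using tilted_prob_between(1) params(3) by linarith
  show "tilted_prob p q \<le> 1/2" using tilted_prob_between(2) params(4) p_le by linarith
  then show "tilted_prob p q < 1" by simp
  show "real n * tilted_prob p q \<ge> 1"
    using mult_left_mono[OF tilted_prob_between(1), of "real n"] n_sqrt_pq by simp
  have "(tilted_prob p q)\<^sup>2 \<le> (2 * sqrt (p * q))\<^sup>2"
    using tilted_prob_between params by (intro power_mono) auto
  also have "\<dots> = 4 * (p * q)" using q_pos q_le_p by (simp add: power_mult_distrib)
  finally have "real n * (tilted_prob p q)\<^sup>2 \<le> real n * (4 * (p * q))" by (rule mult_left_mono) simp
  then show "real n * (tilted_prob p q)\<^sup>2 \<le> 1/2" using n_pq by simp
qed

lemma bhattacharyya_power_ge: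
  "exp (-1) * exp (- (real n * (sqrt p - sqrt q)\<^sup>2)) \<le> bhattacharyya p q ^ (2 * n)"
proof -
  define w where "w = (sqrt p - sqrt q)\<^sup>2 / 2 + (p - q)\<^sup>2 / 4"
  have "(sqrt p - sqrt q)\<^sup>2 \<le> (sqrt p)\<^sup>2" using q_pos q_le_p by (intro power_mono) auto
  moreover have "(p - q)\<^sup>2 \<le> p\<^sup>2" using q_pos q_le_p by (intro power_mono) auto
  moreover have "p * p \<le> p * (1/4)" by (rule mult_left_mono) (use params(1) p_le in auto)
  then have "p\<^sup>2 \<le> p / 4" by (simp add: power2_eq_square)
  ultimately have "w \<le> p" using params(1) by (simp add: w_def)
  moreover have "0 \<le> w" by (simp add: w_def)
  ultimately have w: "0 \<le> w" "w \<le> p" "w\<^sup>2 \<le> p\<^sup>2" "(p - q)\<^sup>2 \<le> p\<^sup>2"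
    using power_mono[of w p 2] \<open>(p - q)\<^sup>2 \<le> p\<^sup>2\<close> by auto
  then have "w \<le> 1/2" using p_le by simp
  have "-1 - real n * (sqrt p - sqrt q)\<^sup>2 \<le> real (2 * n) * (- w - 2 * w\<^sup>2)"
    using mult_left_mono[OF w(3), of "real n"] mult_left_mono[OF w(4), of "real n"] n_p2
    by (simp add: w_def algebra_simps)
  also have "\<dots> \<le> real (2 * n) * ln (1 - w)"
    using ln_one_minus_pos_lower_bound[OF w(1) \<open>w \<le> 1/2\<close>] by (intro mult_left_mono) auto
  finally have "exp (-1 - real n * (sqrt p - sqrt q)\<^sup>2) \<le> exp (ln (1 - w)) ^ (2 * n)"
    by (simp add: exp_of_nat_mult[symmetric])
  also have "exp (ln (1 - w)) ^ (2 * n) = (1 - w) ^ (2 * n)" using \<open>w \<le> 1/2\<close> by simp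
  also have "(1 - w) ^ (2 * n) \<le> bhattacharyya p q ^ (2 * n)"
    using bhattacharyya_ge[of q p] q_pos q_le_p p_le \<open>w \<le> 1/2\<close>
    by (intro power_mono) (auto simp: w_def)
  finally show ?thesis by (simp add: exp_add[symmetric])
qed

lemma collision_ge:
  "1 / (16 * sqrt (real n * sqrt (p * q))) \<le> (\<Sum>k\<le>n. (binom_pmf n (tilted_prob p q) k)\<^sup>2)"
proof -
  have "sqrt (real n * tilted_prob p q) \<le> sqrt (2 * (real n * sqrt (p * q)))"
    using mult_left_mono[OF tilted_prob_between(2), of "real n"] by (intro real_sqrt_le_mono) simp
  also have "\<dots> = sqrt 2 * sqrt (real n * sqrt (p * q))" by (simp add: real_sqrt_mult)
  finally have "11 * sqrt (real n * tilted_prob p q) \<le> 11 * sqrt 2 * sqrt (real n * sqrt (p * q))"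
    by simp
  moreover have "11 * sqrt 2 * sqrt (real n * sqrt (p * q)) \<le> 16 * sqrt (real n * sqrt (p * q))"
  proof (rule mult_right_mono)
    have "sqrt 2 \<le> sqrt ((16/11)\<^sup>2::real)" by (intro real_sqrt_le_mono) (simp add: power2_eq_square)
    then show "11 * sqrt 2 \<le> (16::real)" by simp
  qed (simp add: order_trans[OF zero_le_one n_sqrt_pq])
  ultimately have "11 * sqrt (real n * tilted_prob p q) \<le> 16 * sqrt (real n * sqrt (p * q))"
    by linarith
  then have "1 / (16 * sqrt (real n * sqrt (p * q))) \<le> 1 / (11 * sqrt (real n * tilted_prob p q))"
    using tilted_prob_regime n_sqrt_pq by (intro divide_left_mono mult_pos_pos) auto
  also have "\<dots> \<le> (\<Sum>k\<le>n. (binom_pmf n (tilted_prob p q) k)\<^sup>2)"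
    using tilted_prob_regime by (intro binom_collision_ge) auto
  finally show ?thesis .
qed

lemma collision_le:
  "(\<Sum>k\<le>n. (binom_pmf n (tilted_prob p q) k)\<^sup>2) \<le> 3 * exp 1 / sqrt (real n * sqrt (p * q))"
proof -
  have "(\<Sum>k\<le>n. (binom_pmf n (tilted_prob p q) k)\<^sup>2) \<le> 3 * exp 1 / sqrt (real n * tilted_prob p q)"
    using tilted_prob_regime by (intro binom_collision_le) auto
  also have "\<dots> \<le> 3 * exp 1 / sqrt (real n * sqrt (p * q))"
    using tilted_prob_between tilted_prob_regime(4) n_sqrt_pq params
    by (intro divide_left_mono real_sqrt_le_mono mult_left_mono mult_pos_pos) auto
  finally show ?thesis .
qed

lemma Pnpq_ge:
  "exp (-1) * exp (- (real n * (sqrt p - sqrt q)\<^sup>2)) / (16 * sqrt (real n * sqrt (p * q)))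
     \<le> Pnpq n p q"
proof -
  have "0 < tilt_ratio p q" using params q_pos q_le_p by (simp add: tilt_ratio_def)
  then have "(\<Sum>k\<le>n. (binom_pmf n (tilted_prob p q) k)\<^sup>2)
      \<le> tilted_sum (tilt_ratio p q) (binom_pmf n (tilted_prob p q)) n"
    using tilted_prob_regime by (intro tilted_sum_ge binom_pmf_nonneg) auto
  with collision_ge have "1 / (16 * sqrt (real n * sqrt (p * q)))
      \<le> tilted_sum (tilt_ratio p q) (binom_pmf n (tilted_prob p q)) n"
    by (rule order_trans)
  then have "exp (-1) * exp (- (real n * (sqrt p - sqrt q)\<^sup>2)) * (1 / (16 * sqrt (real n * sqrt (p * q))))
      \<le> bhattacharyya p q ^ (2 * n) * tilted_sum (tilt_ratio p q) (binom_pmf n (tilted_prob p q)) n"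
    using bhattacharyya_power_ge params by (intro mult_mono) auto
  then show ?thesis using Pnpq_eq_tilted_sum[OF q_pos q_le_p params(2)] by simp
qed

lemma Pnpq_le:
  assumes "q < p"
  shows "Pnpq n p q \<le> exp (- (real n * (sqrt p - sqrt q)\<^sup>2)) * (sqrt p / (sqrt p - sqrt q))
           * (3 * exp 1 / sqrt (real n * sqrt (p * q)))"
proof -
  let ?S = "tilted_sum (tilt_ratio p q) (binom_pmf n (tilted_prob p q)) n"
  let ?s = "sqrt p / sqrt q"
  have s: "1 < ?s" using assms q_pos by simp
  have t: "?s \<le> tilt_ratio p q" using tilt_ratio_ge q_pos q_le_p params by blast
  have R: "\<And>k. 0 \<le> binom_pmf n (tilted_prob p q) k" using tilted_prob_regime by (simp add: binom_pmf_nonneg)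
  have "?S \<le> tilt_ratio p q / (tilt_ratio p q - 1) * (\<Sum>k\<le>n. (binom_pmf n (tilted_prob p q) k)\<^sup>2)"
    using s t R by (intro tilted_sum_le) auto
  also have "\<dots> \<le> ?s / (?s - 1) * (3 * exp 1 / sqrt (real n * sqrt (p * q)))"
  proof (rule mult_mono[OF divide_diff_one_antimono[OF s t] collision_le])
    show "0 \<le> ?s / (?s - 1)" using s q_pos params(1) by (intro divide_nonneg_pos) auto
  qed (simp add: sum_nonneg)
  also have "?s / (?s - 1) = sqrt p / (sqrt p - sqrt q)" using q_pos params(1) by (simp add: field_simps)
  finally have S: "?S \<le> sqrt p / (sqrt p - sqrt q) * (3 * exp 1 / sqrt (real n * sqrt (p * q)))" .
  have "0 \<le> (\<Sum>k\<le>n. (binom_pmf n (tilted_prob p q) k)\<^sup>2)" by (simp add: sum_nonneg)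
  also have "\<dots> \<le> ?S" using s t by (intro tilted_sum_ge R) linarith
  finally have "0 \<le> ?S" .
  moreover have "bhattacharyya p q ^ (2 * n) \<le> exp (- (real n * (sqrt p - sqrt q)\<^sup>2))"
    using bhattacharyya_power_le params q_pos q_le_p by simp
  ultimately have "bhattacharyya p q ^ (2 * n) * ?S
      \<le> exp (- (real n * (sqrt p - sqrt q)\<^sup>2)) * (sqrt p / (sqrt p - sqrt q) * (3 * exp 1 / sqrt (real n * sqrt (p * q))))"
    using S by (intro mult_mono) auto
  then show ?thesis using Pnpq_eq_tilted_sum[OF q_pos q_le_p params(2)] by (simp add: mult.assoc)
qed

end

lemma Pnpq_commute: "Pnpq n p q = Pnpq n q p"
  unfolding Pnpq_def Pmnpq_def by (simp only: max.commute min.commute)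

lemma sqrt_scaled_diff_square:
  fixes a b x :: real
  assumes "0 \<le> a" "0 \<le> b" "0 \<le> x"
  shows "(sqrt (a * x) - sqrt (b * x))\<^sup>2 = (a + b - 2 * sqrt (a * b)) * x"
  using assms by (simp add: real_sqrt_mult power2_diff power_mult_distrib algebra_simps)

lemma exp_half_ln: "0 < L \<Longrightarrow> exp (ln L / 2) = sqrt L"
  using powr_half_sqrt[of L] by (simp add: powr_def)

lemma exponent_nonneg_imp_ge_half:
  fixes D L :: real
  assumes "0 < L" "0 \<le> (D - 1) * L + ln L / 2"
  shows "1/2 \<le> D"
proof (rule ccontr)
  assume "\<not> 1/2 \<le> D"
  then have "(D - 1) * L < (-1/2) * L" using assms(1) by (intro mult_strict_right_mono) auto
  with assms ln_less_self[OF assms(1)] show False by linarith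
qed

lemma sqrt_mult_between:
  fixes a b C :: real
  assumes "0 < C" "1/C \<le> a" "a \<le> C" "1/C \<le> b" "b \<le> C"
  shows "1/C \<le> sqrt (a * b)" "sqrt (a * b) \<le> C"
proof -
  have "0 < 1/C" using assms by simp
  then have "0 \<le> a" "0 \<le> b" using assms by linarith+
  have "(1/C) * (1/C) \<le> a * b" by (rule mult_mono) (use assms \<open>0 < 1/C\<close> \<open>0 \<le> a\<close> in auto)
  moreover have "a * b \<le> C * C" by (rule mult_mono) (use assms \<open>0 \<le> a\<close> \<open>0 \<le> b\<close> in auto)
  ultimately have "(1/C)\<^sup>2 \<le> a * b" "a * b \<le> C\<^sup>2" by (simp_all only: power2_eq_square)
  then show "1/C \<le> sqrt (a * b)" "sqrt (a * b) \<le> C"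
    using assms(1) by (auto intro: real_le_rsqrt real_le_lsqrt)
qed

lemma sqrt_le_self: "1 \<le> x \<Longrightarrow> sqrt x \<le> x"
  by (intro real_le_lsqrt) (auto simp: power2_eq_square)

lemma sqrt_ratio_le:
  fixes a b C x :: real
  assumes C: "1 \<le> C" and ab: "0 < b" "b \<le> a" "a \<le> C" and x: "0 < x"
    and D: "1/2 \<le> a + b - 2 * sqrt (a * b)"
  shows "sqrt (a * x) / (sqrt (a * x) - sqrt (b * x)) \<le> 2 * C"
proof -
  have "(sqrt a - sqrt b)\<^sup>2 = a + b - 2 * sqrt (a * b)"
    using ab by (simp add: power2_diff real_sqrt_mult)
  moreover have "sqrt b \<le> sqrt a" using ab by simp
  ultimately have "sqrt (a + b - 2 * sqrt (a * b)) = sqrt a - sqrt b" by (intro real_sqrt_unique) auto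
  moreover have "sqrt (1/4) \<le> sqrt (a + b - 2 * sqrt (a * b))" using D by (intro real_sqrt_le_mono) simp
  ultimately have gap: "1/2 \<le> sqrt a - sqrt b" by (simp add: real_sqrt_divide)
  have "sqrt a \<le> C" using ab C real_sqrt_le_mono[of a C] sqrt_le_self[of C] by linarith
  then have "sqrt a / (sqrt a - sqrt b) \<le> C / (1/2)" using gap ab C by (intro frac_le) auto
  moreover have "sqrt (a * x) = sqrt a * sqrt x" "sqrt (a * x) - sqrt (b * x) = (sqrt a - sqrt b) * sqrt x"
    by (simp_all add: real_sqrt_mult algebra_simps)
  ultimately show ?thesis using x by simp
qed

text \<open>Large enough \<open>n\<close>, for which \<open>p = a L / n\<close>, \<open>q = b L / n\<close> with \<open>L = ln n\<close> and
  \<open>a, b \<in> [1/C, C]\<close> fall under \<open>tilt_regime\<close>.\<close>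
locale log_scaling =
  fixes C :: real and n :: nat
  assumes C_ge: "1 \<le> C" and C_le_ln: "C \<le> ln (real n)"
    and ln_small: "C * ln (real n) / real n \<le> 1/4"
    and ln2_small: "C\<^sup>2 * (ln (real n))\<^sup>2 / real n \<le> 1/8"
begin

abbreviation "L \<equiv> ln (real n)"

lemma L_pos: "0 < L" and n_pos: "0 < n" and n_eq_exp: "real n = exp L"
proof -
  show "0 < L" using C_ge C_le_ln by linarith
  then show "0 < n" by (cases n) auto
  then show "real n = exp L" by simp
qed

lemma pos_of_inverse_le: "1/C \<le> a \<Longrightarrow> 0 < a"
  using C_ge by (smt (verit) divide_pos_pos)

lemma tilt_regime_scaled:
  assumes ab: "1/C \<le> b" "b \<le> a" "a \<le> C"
  shows "tilt_regime n (a * L / real n) (b * L / real n)"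
proof -
  define x where "x = L / real n"
  have x: "0 < x" "real n * x = L" using L_pos n_pos by (simp_all add: x_def)
  have b: "0 < b" using pos_of_inverse_le ab by simp
  have Cx: "C * x \<le> 1/4" and C2x: "real n * (C * x)\<^sup>2 \<le> 1/8"
    using ln_small ln2_small n_pos by (simp_all add: x_def power2_eq_square field_simps)
  have "1/C \<le> sqrt (a * b)" using sqrt_mult_between ab C_ge by auto
  then have "L * (1/C) \<le> L * sqrt (a * b)" using L_pos by (intro mult_left_mono) auto
  moreover have "L * (1/C) \<ge> 1" using C_le_ln C_ge by (simp add: field_simps)
  moreover have "real n * sqrt (a * x * (b * x)) = L * sqrt (a * b)"
    using x b ab by (simp add: real_sqrt_mult power2_eq_square[symmetric] algebra_simps)
  ultimately have sqrt_pq: "1 \<le> real n * sqrt (a * x * (b * x))" by linarith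
  have "a * x * (b * x) \<le> (C * x)\<^sup>2" "(a * x)\<^sup>2 \<le> (C * x)\<^sup>2"
    using ab b x by (auto simp: power2_eq_square intro!: mult_mono)
  then have "real n * (a * x * (b * x)) \<le> real n * (C * x)\<^sup>2" "real n * (a * x)\<^sup>2 \<le> real n * (C * x)\<^sup>2"
    by (simp_all add: mult_left_mono)
  then have "real n * (a * x * (b * x)) \<le> 1/8" "real n * (a * x)\<^sup>2 \<le> 1/5" using C2x by linarith+
  moreover have "b * x \<le> a * x" "a * x \<le> C * x" using ab x by (simp_all add: mult_right_mono)
  moreover from this(2) have "a * x \<le> 1/4" using Cx by linarith
  ultimately have "tilt_regime n (a * x) (b * x)"
    using b x sqrt_pq by unfold_locales auto
  then show ?thesis by (simp add: x_def)
qed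

lemma scaled_identities:
  assumes "0 < a" "0 < b"
  shows "real n * (sqrt (a * L / real n) - sqrt (b * L / real n))\<^sup>2 = L * (a + b - 2 * sqrt (a * b))"
    and "real n * sqrt (a * L / real n * (b * L / real n)) = L * sqrt (a * b)"
proof -
  have x: "0 \<le> L / real n" "real n * (L / real n) = L" using L_pos n_pos by auto
  have "(sqrt (a * L / real n) - sqrt (b * L / real n))\<^sup>2 = (a + b - 2 * sqrt (a * b)) * (L / real n)"
    using sqrt_scaled_diff_square[OF _ _ x(1), of a b] assms by (simp only: times_divide_eq_right)
  then show "real n * (sqrt (a * L / real n) - sqrt (b * L / real n))\<^sup>2 = L * (a + b - 2 * sqrt (a * b))"
    using x(2) by (metis mult.commute mult.left_commute)
  have "a * L / real n * (b * L / real n) = (a * b) * (L / real n)\<^sup>2" by (simp add: power2_eq_square)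
  then have "sqrt (a * L / real n * (b * L / real n)) = sqrt (a * b) * (L / real n)"
    using x(1) L_pos by (simp add: real_sqrt_mult)
  then show "real n * sqrt (a * L / real n * (b * L / real n)) = L * sqrt (a * b)"
    using x(2) by (metis mult.commute mult.left_commute)
qed

lemma exp_exponent: "real n * exp (- (L * D)) / sqrt L = exp (- ((D - 1) * L + ln L / 2))"
proof -
  have "real n * exp (- (L * D)) / sqrt L = exp L * exp (- (L * D)) / exp (ln L / 2)"
    using n_eq_exp exp_half_ln[OF L_pos] by simp
  also have "\<dots> = exp (- ((D - 1) * L + ln L / 2))"
    by (simp add: exp_diff exp_add[symmetric] algebra_simps)
  finally show ?thesis .
qed

lemma Pnpq_scaled_ge_ordered:
  assumes ab: "1/C \<le> b" "b \<le> a" "a \<le> C"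
  shows "exp (-1) / (16 * sqrt C) * exp (- ((a + b - 2 * sqrt (a * b) - 1) * L + ln L / 2))
           \<le> real n * Pnpq n (a * L / real n) (b * L / real n)"
proof -
  interpret tilt_regime n "a * L / real n" "b * L / real n" by (rule tilt_regime_scaled[OF ab])
  define D where "D = a + b - 2 * sqrt (a * b)"
  have pos: "0 < b" "0 < a" using pos_of_inverse_le ab by auto
  have "sqrt (a * b) \<le> C" using sqrt_mult_between ab C_ge by auto
  then have root_le: "sqrt (L * sqrt (a * b)) \<le> sqrt L * sqrt C"
    using C_ge L_pos by (simp add: real_sqrt_mult[symmetric] mult_left_mono)
  have root_pos: "0 < sqrt (L * sqrt (a * b))" using L_pos pos by simp
  have "exp (-1) / (16 * sqrt C) * exp (- ((D - 1) * L + ln L / 2))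
      = real n * (exp (-1) * exp (- (L * D)) / (16 * (sqrt L * sqrt C)))"
    by (simp only: exp_exponent[symmetric]) (simp add: field_simps)
  also have "\<dots> \<le> real n * (exp (-1) * exp (- (L * D)) / (16 * sqrt (L * sqrt (a * b))))"
    using root_le root_pos C_ge L_pos by (intro mult_left_mono divide_left_mono mult_pos_pos) auto
  also have "\<dots> \<le> real n * Pnpq n (a * L / real n) (b * L / real n)"
    using Pnpq_ge scaled_identities[OF pos(2,1)] by (intro mult_left_mono) (auto simp: D_def)
  finally show ?thesis unfolding D_def .
qed

lemma Pnpq_scaled_le_ordered:
  assumes ab: "1/C \<le> b" "b \<le> a" "a \<le> C" and D: "1/2 \<le> a + b - 2 * sqrt (a * b)"
  shows "real n * Pnpq n (a * L / real n) (b * L / real n)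
           \<le> 6 * exp 1 * C\<^sup>2 * exp (- ((a + b - 2 * sqrt (a * b) - 1) * L + ln L / 2))"
proof -
  interpret tilt_regime n "a * L / real n" "b * L / real n" by (rule tilt_regime_scaled[OF ab])
  define D where "D = a + b - 2 * sqrt (a * b)"
  have pos: "0 < b" "0 < a" using pos_of_inverse_le ab by auto
  have "0 < L / real n" using L_pos n_pos by simp
  from sqrt_ratio_le[OF C_ge pos(1) ab(2,3) this D]
  have ratio: "sqrt (a * L / real n) / (sqrt (a * L / real n) - sqrt (b * L / real n)) \<le> 2 * C"
    unfolding times_divide_eq_right .
  have "sqrt L / C \<le> sqrt L / sqrt C"
    using C_ge L_pos sqrt_le_self[of C] by (intro divide_left_mono) auto
  also have "\<dots> = sqrt (L * (1/C))" by (simp add: real_sqrt_mult real_sqrt_divide)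
  also have "\<dots> \<le> sqrt (L * sqrt (a * b))"
    using sqrt_mult_between[of C a b] ab C_ge L_pos by (intro real_sqrt_le_mono mult_left_mono) auto
  finally have inv: "3 * exp 1 / sqrt (L * sqrt (a * b)) \<le> 3 * exp 1 / (sqrt L / C)"
    using L_pos C_ge pos by (intro divide_left_mono mult_pos_pos) auto
  have "b \<noteq> a" using D by auto
  then have "b * L / real n < a * L / real n" using ab L_pos n_pos by (simp add: divide_strict_right_mono)
  then have "Pnpq n (a * L / real n) (b * L / real n)
      \<le> exp (- (L * D)) * (sqrt (a * L / real n) / (sqrt (a * L / real n) - sqrt (b * L / real n)))
        * (3 * exp 1 / sqrt (L * sqrt (a * b)))"
    by (rule Pnpq_le[unfolded scaled_identities[OF pos(2,1)], folded D_def])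
  also have "\<dots> \<le> exp (- (L * D)) * (2 * C) * (3 * exp 1 / (sqrt L / C))"
    using C_ge L_pos pos by (intro mult_mono[OF mult_left_mono[OF ratio] inv]) auto
  finally have "real n * Pnpq n (a * L / real n) (b * L / real n)
      \<le> real n * (exp (- (L * D)) * (2 * C) * (3 * exp 1 / (sqrt L / C)))"
    by (rule mult_left_mono) simp
  also have "\<dots> = 6 * exp 1 * C\<^sup>2 * (real n * exp (- (L * D)) / sqrt L)"
    using C_ge L_pos by (simp add: field_simps power2_eq_square)
  finally show ?thesis unfolding exp_exponent D_def .
qed

lemma Pnpq_scaled_bounds:
  assumes ab: "1/C \<le> a" "a \<le> C" "1/C \<le> b" "b \<le> C"
  shows "exp (-1) / (16 * sqrt C) * exp (- ((a + b - 2 * sqrt (a * b) - 1) * L + ln L / 2))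
           \<le> real n * Pnpq n (a * L / real n) (b * L / real n)"
    and "1/2 \<le> a + b - 2 * sqrt (a * b) \<Longrightarrow> real n * Pnpq n (a * L / real n) (b * L / real n)
           \<le> 6 * exp 1 * C\<^sup>2 * exp (- ((a + b - 2 * sqrt (a * b) - 1) * L + ln L / 2))"
proof -
  have swap: "b + a - 2 * sqrt (b * a) = a + b - 2 * sqrt (a * b)"
    "Pnpq n (b * L / real n) (a * L / real n) = Pnpq n (a * L / real n) (b * L / real n)"
    by (simp_all add: mult.commute Pnpq_commute)
  show "exp (-1) / (16 * sqrt C) * exp (- ((a + b - 2 * sqrt (a * b) - 1) * L + ln L / 2))
      \<le> real n * Pnpq n (a * L / real n) (b * L / real n)"
    using Pnpq_scaled_ge_ordered[of b a] Pnpq_scaled_ge_ordered[of a b] ab swap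
    by (cases "b \<le> a") auto
  show "real n * Pnpq n (a * L / real n) (b * L / real n)
      \<le> 6 * exp 1 * C\<^sup>2 * exp (- ((a + b - 2 * sqrt (a * b) - 1) * L + ln L / 2))"
    if "1/2 \<le> a + b - 2 * sqrt (a * b)"
    using Pnpq_scaled_le_ordered[of b a] Pnpq_scaled_le_ordered[of a b] ab swap that
    by (cases "b \<le> a") auto
qed

end

section \<open>The asymptotic criterion\<close>

lemma eventually_log_scaling:
  assumes "1 \<le> C"
  shows "\<forall>\<^sub>F n in sequentially. log_scaling C n"
proof -
  have "filterlim (\<lambda>n. ln (real n)) at_top sequentially" by real_asymp
  then have "\<forall>\<^sub>F n in sequentially. C \<le> ln (real n)" by (simp add: filterlim_at_top)
  moreover have "((\<lambda>n. C * (ln (real n) / real n)) \<longlongrightarrow> C * 0) sequentially"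
    by (intro tendsto_mult tendsto_const lim_ln_over_n)
  then have "\<forall>\<^sub>F n in sequentially. C * (ln (real n) / real n) < 1/4"
    by (intro order_tendstoD(2)) auto
  moreover have "((\<lambda>n. (ln (real n))\<^sup>2 / real n) \<longlongrightarrow> 0) sequentially" by real_asymp
  then have "((\<lambda>n. C\<^sup>2 * ((ln (real n))\<^sup>2 / real n)) \<longlongrightarrow> C\<^sup>2 * 0) sequentially"
    by (intro tendsto_mult tendsto_const)
  then have "\<forall>\<^sub>F n in sequentially. C\<^sup>2 * ((ln (real n))\<^sup>2 / real n) < 1/8"
    by (intro order_tendstoD(2)) auto
  ultimately show ?thesis
    by eventually_elim (use assms in \<open>unfold_locales, auto\<close>)
qed

lemma smallo_one_over_iff:
  fixes f :: "nat \<Rightarrow> real"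
  shows "f \<in> o(\<lambda>n. 1 / real n) \<longleftrightarrow> ((\<lambda>n. real n * f n) \<longlongrightarrow> 0) sequentially"
proof
  assume "f \<in> o(\<lambda>n. 1 / real n)"
  from smalloD_tendsto[OF this] show "((\<lambda>n. real n * f n) \<longlongrightarrow> 0) sequentially"
    by (simp add: mult.commute)
next
  assume "((\<lambda>n. real n * f n) \<longlongrightarrow> 0) sequentially"
  then have "((\<lambda>n. f n / (1 / real n)) \<longlongrightarrow> 0) sequentially" by (simp add: mult.commute)
  moreover have "\<forall>\<^sub>F n in sequentially. 1 / real n \<noteq> 0"
    using eventually_gt_at_top[of 0] by eventually_elim simp
  ultimately show "f \<in> o(\<lambda>n. 1 / real n)" by (rule smalloI_tendsto)
qed

lemma tendsto_zero_iff_filterlim_of_exp_bounds: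
  fixes g E :: "nat \<Rightarrow> real"
  assumes c: "0 < c" and lower: "\<forall>\<^sub>F n in sequentially. c * exp (- E n) \<le> g n"
    and upper: "\<forall>\<^sub>F n in sequentially. 0 \<le> E n \<longrightarrow> g n \<le> K * exp (- E n)"
  shows "(g \<longlongrightarrow> 0) sequentially \<longleftrightarrow> filterlim E at_top sequentially"
proof
  assume g: "(g \<longlongrightarrow> 0) sequentially"
  show "filterlim E at_top sequentially" unfolding filterlim_at_top
  proof
    fix Z :: real
    have "\<forall>\<^sub>F n in sequentially. g n < c * exp (- Z)" using g c by (intro order_tendstoD(2)) auto
    with lower show "\<forall>\<^sub>F n in sequentially. Z \<le> E n"
    proof eventually_elim
      case (elim n)
      then have "c * exp (- E n) < c * exp (- Z)" by linarith
      then show "Z \<le> E n" using c by simp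
    qed
  qed
next
  assume E: "filterlim E at_top sequentially"
  then have "\<forall>\<^sub>F n in sequentially. 0 \<le> E n" by (simp add: filterlim_at_top)
  with upper have up: "\<forall>\<^sub>F n in sequentially. g n \<le> K * exp (- E n)" by eventually_elim auto
  have low: "\<forall>\<^sub>F n in sequentially. 0 \<le> g n"
    using lower
  proof eventually_elim
    case (elim n)
    moreover have "0 \<le> c * exp (- E n)" using c by simp
    ultimately show "0 \<le> g n" by linarith
  qed
  have "filterlim (\<lambda>n. - E n) at_bot sequentially" using E by (simp add: filterlim_uminus_at_top)
  then have "((\<lambda>n. K * exp (- E n)) \<longlongrightarrow> K * 0) sequentially"
    by (intro tendsto_mult tendsto_const filterlim_compose[OF exp_at_bot])
  then show "(g \<longlongrightarrow> 0) sequentially" using tendsto_sandwich[OF low up tendsto_const] by simp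
qed

lemma one_le_of_between:
  fixes x C :: real
  assumes "0 < x" "1/C \<le> x" "x \<le> C"
  shows "1 \<le> C"
proof (rule ccontr)
  assume "\<not> 1 \<le> C"
  moreover have "0 < C" using assms by linarith
  ultimately have "C * C < 1" using mult_strict_mono[of C 1 C 1] by simp
  then have "C < 1/C" using \<open>0 < C\<close> by (simp add: field_simps)
  with assms show False by linarith
qed

lemma eventually_Pnpq_exp_bounds:
  fixes a b E g :: "nat \<Rightarrow> real"
  assumes ab: "\<forall>\<^sub>F n in sequentially. 1 / C \<le> a n \<and> a n \<le> C \<and> 1 / C \<le> b n \<and> b n \<le> C"
    and C: "1 \<le> C"
    and E: "\<And>n. E n = (a n + b n - 2 * sqrt (a n * b n) - 1) * ln (real n) + ln (ln (real n)) / 2"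
    and g: "\<And>n. g n = real n * Pnpq n (a n * ln (real n) / real n) (b n * ln (real n) / real n)"
  shows "\<forall>\<^sub>F n in sequentially. exp (-1) / (16 * sqrt C) * exp (- E n) \<le> g n"
    and "\<forall>\<^sub>F n in sequentially. 0 \<le> E n \<longrightarrow> g n \<le> 6 * exp 1 * C\<^sup>2 * exp (- E n)"
proof -
  have "\<forall>\<^sub>F n in sequentially. exp (-1) / (16 * sqrt C) * exp (- E n) \<le> g n
      \<and> (0 \<le> E n \<longrightarrow> g n \<le> 6 * exp 1 * C\<^sup>2 * exp (- E n))"
    using ab eventually_log_scaling[OF C]
  proof eventually_elim
    case (elim n)
    then interpret log_scaling C n by simp
    show ?case
      using Pnpq_scaled_bounds[of "a n" "b n"] elim
        exponent_nonneg_imp_ge_half[OF L_pos, of "a n + b n - 2 * sqrt (a n * b n)"]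
      unfolding E g by auto
  qed
  then show "\<forall>\<^sub>F n in sequentially. exp (-1) / (16 * sqrt C) * exp (- E n) \<le> g n"
    and "\<forall>\<^sub>F n in sequentially. 0 \<le> E n \<longrightarrow> g n \<le> 6 * exp 1 * C\<^sup>2 * exp (- E n)"
    unfolding eventually_conj_iff by blast+
qed

theorem proposition2p8:
  fixes a b :: "nat \<Rightarrow> real"
  assumes apos: "\<And>n. a n > 0" and bpos: "\<And>n. b n > 0"
    and bdd: "\<exists>C. \<forall>\<^sub>F n in sequentially.
                 1 / C \<le> a n \<and> a n \<le> C \<and> 1 / C \<le> b n \<and> b n \<le> C"
  shows "(\<lambda>n. Pnpq n (a n * ln (real n) / real n) (b n * ln (real n) / real n))
            \<in> o(\<lambda>n. 1 / real n)
         \<longleftrightarrow> filterlim (\<lambda>n. (a n + b n - 2 * sqrt (a n * b n) - 1) * ln (real n)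
                              + ln (ln (real n)) / 2) at_top sequentially"
proof -
  obtain C where C: "\<forall>\<^sub>F n in sequentially. 1 / C \<le> a n \<and> a n \<le> C \<and> 1 / C \<le> b n \<and> b n \<le> C"
    using bdd by blast
  then obtain N where "\<And>n. N \<le> n \<Longrightarrow> 1 / C \<le> a n \<and> a n \<le> C"
    unfolding eventually_sequentially by blast
  then have "1 \<le> C" using one_le_of_between[OF apos] by blast
  define E where "E n = (a n + b n - 2 * sqrt (a n * b n) - 1) * ln (real n) + ln (ln (real n)) / 2"
    for n
  define g where "g n = real n * Pnpq n (a n * ln (real n) / real n) (b n * ln (real n) / real n)"
    for n
  have "0 < exp (-1) / (16 * sqrt C)" using \<open>1 \<le> C\<close> by simp
  from tendsto_zero_iff_filterlim_of_exp_bounds[OF this eventually_Pnpq_exp_bounds[OF C \<open>1 \<le> C\<close> E_def g_def]]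
  show ?thesis unfolding smallo_one_over_iff E_def g_def .
qed

end
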